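(* Let $T$ be an aperiodic $1$-bounded streaming $\omega$-string transducer with variable set $\mathcal X$. For all variables $X,Y\in\mathcal X$ there exists a first-order formula $\phi_{X\rightsquigarrow Y}(x,y)$ with two free variables such that for all strings $s\in\mathrm{dom}(T)$ and any two positions $i\le j$ of $s$, $s\models\phi_{X\rightsquigarrow Y}(i,j)$ iff $(q_i,X)\rightsquigarrow_1^{s[i+1:j]}(q_j,Y)$, where $q_0q_1\cdots$ is the accepting run of $T$ on $s$.
   Context: Streaming $\omega$-string transducer (SST): $T=(\Sigma,\Gamma,Q,q_0,\delta,\mathcal X,\rho,F)$ with $\delta:Q\times\Sigma\to Q$, finite variables $\mathcal X$, copyless updates $\rho:Q\times\Sigma\to[\mathcal X\to(\Gamma\cup\mathcal X)^*]$, partial output function $F:2^Q\rightharpoonup\mathcal X^*$. Run on $s=a_1a_2\cdots$: $q_0q_1\cdots$, $q_i=\delta(q_{i-1},a_i)$ ($q_i$ is the state after reading the first $i$ letters); it is accepting and $s\in\mathrm{dom}(T)$ iff the set of states visited infinitely often is in $\mathrm{dom}(F)$. $s[i+1:j]$ denotes the factor $a_{i+1}\cdots a_j$ (empty if $i=j$). For $u\in\Sigma^*$, states $p,q$ and variables $X,Y$: with $\sigma$ the composition of the updates along the run from $p$ on $u$ (starting from the identity substitution), $(p,X)\rightsquigarrow^u_k(q,Y)$ means that this run ends in $q$ and $X$ occurs exactly $k$ times in $\sigma(Y)$. Transition matrices: with $\mathrm{dom}(F)=\{F_1,\dots,F_n\}$, $M_u[(p,X)][(q,Y)]=\bot$ if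 the run from $p$ on $u$ does not end in $q$, else $(k,(x_1,\dots,x_n))$ where $(p,X)\rightsquigarrow^u_k(q,Y)$ and, with $S$ the set of visited states, $x_i=0$ if $S\not\subseteq F_i$, $1$ if $S=F_i$, $S$ if $S\subsetneq F_i$. $T$ is aperiodic if some $m\ge1$ gives $M_{u^m}=M_{u^{m+1}}$ for all $u$, and $1$-bounded if all non-$\bot$ entries $(k,\dots)$ satisfy $k\le1$. First-order formulas are over $\omega$-strings with positions $\{1,2,\dots\}$, natural order and unary letter predicates. *)

theory Defs
  imports Main
begin

text \<open>Sigma = 'a (finite), Gamma = 'g, Q = 'q (finite), variables = 'x (finite).
  Updates map each variable to a word over Gamma + variables (Inl = output letter,
  Inr = variable).  The output function F is partial: outF T S = None means S is not
  in dom(F).\<close>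

record ('a, 'g, 'q, 'x) sst =
  init  :: 'q
  delta :: "'q \<Rightarrow> 'a \<Rightarrow> 'q"
  upd   :: "'q \<Rightarrow> 'a \<Rightarrow> 'x \<Rightarrow> ('g + 'x) list"
  outF  :: "'q set \<Rightarrow> 'x list option"

definition copyless :: "('a, 'g, 'q, 'x::finite) sst \<Rightarrow> bool" where
  "copyless T \<longleftrightarrow> (\<forall>q a X. (\<Sum>Y\<in>UNIV. count_list (upd T q a Y) (Inr X)) \<le> 1)"

definition subst :: "('x \<Rightarrow> ('g + 'x) list) \<Rightarrow> ('g + 'x) list \<Rightarrow> ('g + 'x) list" where
  "subst \<sigma> w = concat (map (\<lambda>c. case c of Inl g \<Rightarrow> [Inl g] | Inr X \<Rightarrow> \<sigma> X) w)"

definition step :: "('a, 'g, 'q, 'x) sst \<Rightarrow> 'q \<times> ('x \<Rightarrow> ('g + 'x) list) \<Rightarrow> 'a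
                     \<Rightarrow> 'q \<times> ('x \<Rightarrow> ('g + 'x) list)" where
  "step T qs a = (delta T (fst qs) a, (\<lambda>Y. subst (snd qs) (upd T (fst qs) a Y)))"

definition run_from :: "('a, 'g, 'q, 'x) sst \<Rightarrow> 'q \<Rightarrow> 'a list \<Rightarrow> 'q \<times> ('x \<Rightarrow> ('g + 'x) list)" where
  "run_from T p u = foldl (step T) (p, (\<lambda>X. [Inr X])) u"

definition state_after :: "('a, 'g, 'q, 'x) sst \<Rightarrow> 'q \<Rightarrow> 'a list \<Rightarrow> 'q" where
  "state_after T p u = foldl (delta T) p u"

definition flows :: "('a, 'g, 'q, 'x) sst \<Rightarrow> 'q \<Rightarrow> 'x \<Rightarrow> 'a list \<Rightarrow> nat \<Rightarrow> 'q \<Rightarrow> 'x \<Rightarrow> bool" where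
  "flows T p X u k q Y \<longleftrightarrow>
     fst (run_from T p u) = q \<and> count_list (snd (run_from T p u) Y) (Inr X) = k"

definition visited :: "('a, 'g, 'q, 'x) sst \<Rightarrow> 'q \<Rightarrow> 'a list \<Rightarrow> 'q set" where
  "visited T p u = {state_after T p (take i u) | i. i \<le> length u}"

datatype 'q flag = Zero | One | Sub "'q set"

text \<open>Transition matrix entries.  The tuple (x_1,...,x_n) indexed by dom(F) = {F_1,...,F_n}
  is represented as a function on dom(F) (value Zero outside dom(F)).\<close>
definition tmat :: "('a, 'g, 'q, 'x) sst \<Rightarrow> 'a list \<Rightarrow> 'q \<times> 'x \<Rightarrow> 'q \<times> 'x
                      \<Rightarrow> (nat \<times> ('q set \<Rightarrow> 'q flag)) option" where
  "tmat T u pX qY =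
    (let p = fst pX; X = snd pX; q = fst qY; Y = snd qY; S = visited T p u in
     if state_after T p u \<noteq> q then None
     else Some (count_list (snd (run_from T p u) Y) (Inr X),
                (\<lambda>Fi. if Fi \<in> dom (outF T) then
                        (if \<not> S \<subseteq> Fi then Zero else if S = Fi then One else Sub S)
                      else Zero)))"

definition wpow :: "'a list \<Rightarrow> nat \<Rightarrow> 'a list" where
  "wpow u m = concat (replicate m u)"

definition aperiodic :: "('a, 'g, 'q, 'x) sst \<Rightarrow> bool" where
  "aperiodic T \<longleftrightarrow> (\<exists>m\<ge>1. \<forall>u. tmat T (wpow u m) = tmat T (wpow u (Suc m)))"

definition one_bounded :: "('a, 'g, 'q, 'x) sst \<Rightarrow> bool" where
  "one_bounded T \<longleftrightarrow> (\<forall>u pX qY k f. tmat T u pX qY = Some (k, f) \<longrightarrow> k \<le> 1)"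

text \<open>An omega-string a_1 a_2 ... is represented as s :: nat => 'a with a_i = s (i - 1).\<close>

definition pref :: "(nat \<Rightarrow> 'a) \<Rightarrow> nat \<Rightarrow> 'a list" where
  "pref s i = map s [0..<i]"

text \<open>factor s i j = s[i+1:j] = a_{i+1} ... a_j\<close>
definition factor :: "(nat \<Rightarrow> 'a) \<Rightarrow> nat \<Rightarrow> nat \<Rightarrow> 'a list" where
  "factor s i j = map s [i..<j]"

text \<open>q_i: state after reading the first i letters.\<close>
definition runq :: "('a, 'g, 'q, 'x) sst \<Rightarrow> (nat \<Rightarrow> 'a) \<Rightarrow> nat \<Rightarrow> 'q" where
  "runq T s i = state_after T (init T) (pref s i)"

definition inf_states :: "('a, 'g, 'q, 'x) sst \<Rightarrow> (nat \<Rightarrow> 'a) \<Rightarrow> 'q set" where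
  "inf_states T s = {q. \<exists>\<^sub>\<infinity>n. runq T s n = q}"

definition in_dom :: "('a, 'g, 'q, 'x) sst \<Rightarrow> (nat \<Rightarrow> 'a) \<Rightarrow> bool" where
  "in_dom T s \<longleftrightarrow> inf_states T s \<in> dom (outF T)"

text \<open>Variables are natural numbers; positions are 1,2,3,...\<close>
datatype 'a fo =
    FLess nat nat
  | FEq nat nat
  | FLetter 'a nat
  | FNot "'a fo"
  | FAnd "'a fo" "'a fo"
  | FEx nat "'a fo"

fun fv :: "'a fo \<Rightarrow> nat set" where
  "fv (FLess x y) = {x, y}"
| "fv (FEq x y) = {x, y}"
| "fv (FLetter a x) = {x}"
| "fv (FNot \<phi>) = fv \<phi>"
| "fv (FAnd \<phi> \<psi>) = fv \<phi> \<union> fv \<psi>"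
| "fv (FEx x \<phi>) = fv \<phi> - {x}"

text \<open>Satisfaction; the valuation maps variables to positions (intended to be \<ge> 1).\<close>
fun sat :: "(nat \<Rightarrow> 'a) \<Rightarrow> (nat \<Rightarrow> nat) \<Rightarrow> 'a fo \<Rightarrow> bool" where
  "sat s \<nu> (FLess x y) \<longleftrightarrow> \<nu> x < \<nu> y"
| "sat s \<nu> (FEq x y) \<longleftrightarrow> \<nu> x = \<nu> y"
| "sat s \<nu> (FLetter a x) \<longleftrightarrow> s (\<nu> x - 1) = a"
| "sat s \<nu> (FNot \<phi>) \<longleftrightarrow> \<not> sat s \<nu> \<phi>"
| "sat s \<nu> (FAnd \<phi> \<psi>) \<longleftrightarrow> sat s \<nu> \<phi> \<and> sat s \<nu> \<psi>"
| "sat s \<nu> (FEx x \<phi>) \<longleftrightarrow> (\<exists>p\<ge>1. sat s (\<nu>(x := p)) \<phi>)"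

end

theory Submission
  imports Defs "HOL-Algebra.Group"
begin

(*
  The behaviour of a word u (for every start state p, the state reached and the numbers k with
  (p,X) \<leadsto>^u_k (q,Y)) composes by matrix multiplication, so words map homomorphically into a
  monoid of behaviours. One-boundedness makes this monoid finite, and aperiodicity of the
  transition matrices makes it aperiodic. Whether (q_i,X) \<leadsto>^{s[i+1:j]}_1 (q_j,Y) holds is
  determined by the behaviours of the prefix s[1:i] (which yields q_i) and of the factor s[i+1:j],
  so it suffices that "the factor between x and y has behaviour f" is first-order definable.

  That is Schuetzenberger's theorem in the local-divisor form of Diekert and Gastin: for a finite
  aperiodic monoid M and FO-definable labels in A \<subseteq> M, the value of the product over an interval
  is FO-definable, by induction on |M| and |A|. Pick c \<noteq> 1 in A. An interval without c-labels is
  handled by A - {c}. Otherwise cut it at its first and last c-label: the outer pieces use labels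
  in A - {c}, and the middle piece c t equals a product over the c-labelled positions in the local
  divisor cM \<inter> Mc, each such position relabelled by c t' c for the block t' since the previous
  one. The local divisor is smaller than M because 1 \<notin> cM when c \<noteq> 1 and M is aperiodic.
*)

section \<open>First-order definability of relations between positions\<close>

definition pos_valuation :: "(nat \<Rightarrow> nat) \<Rightarrow> bool" where
  "pos_valuation \<nu> \<longleftrightarrow> (\<forall>v. 1 \<le> \<nu> v)"

text \<open>Only valuations into the positions \<open>1, 2, \<dots>\<close> matter, so a definable relation is
  unconstrained at \<open>0\<close>; this is why the congruence rules below only compare positive arguments.\<close>

definition fo_definable :: "nat set \<Rightarrow> ((nat \<Rightarrow> 'a) \<Rightarrow> (nat \<Rightarrow> nat) \<Rightarrow> bool) \<Rightarrow> bool" where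
  "fo_definable V \<Phi> \<longleftrightarrow>
     (\<exists>\<phi>::'a fo. fv \<phi> \<subseteq> V \<and> (\<forall>s \<nu>. pos_valuation \<nu> \<longrightarrow> (sat s \<nu> \<phi> \<longleftrightarrow> \<Phi> s \<nu>)))"

definition fo_definable1 :: "((nat \<Rightarrow> 'a) \<Rightarrow> nat \<Rightarrow> bool) \<Rightarrow> bool" where
  "fo_definable1 D \<longleftrightarrow> (\<forall>x. fo_definable {x} (\<lambda>s \<nu>. D s (\<nu> x)))"

definition fo_definable2 :: "((nat \<Rightarrow> 'a) \<Rightarrow> nat \<Rightarrow> nat \<Rightarrow> bool) \<Rightarrow> bool" where
  "fo_definable2 D \<longleftrightarrow> (\<forall>x y. fo_definable {x, y} (\<lambda>s \<nu>. D s (\<nu> x) (\<nu> y)))"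

lemma fo_definable_mono: "fo_definable V \<Phi> \<Longrightarrow> V \<subseteq> W \<Longrightarrow> fo_definable W \<Phi>"
  unfolding fo_definable_def by blast

lemma fo_definable_cong:
  "fo_definable V \<Phi> \<Longrightarrow> (\<And>s \<nu>. pos_valuation \<nu> \<Longrightarrow> \<Phi> s \<nu> = \<Psi> s \<nu>) \<Longrightarrow> fo_definable V \<Psi>"
  unfolding fo_definable_def by auto

lemma fo_definable_conj:
  assumes "fo_definable V \<Phi>" and "fo_definable V \<Psi>"
  shows "fo_definable V (\<lambda>s \<nu>. \<Phi> s \<nu> \<and> \<Psi> s \<nu>)"
proof -
  obtain \<phi> \<psi> where "fv \<phi> \<subseteq> V" "\<forall>s \<nu>. pos_valuation \<nu> \<longrightarrow> (sat s \<nu> \<phi> \<longleftrightarrow> \<Phi> s \<nu>)"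
    "fv \<psi> \<subseteq> V" "\<forall>s \<nu>. pos_valuation \<nu> \<longrightarrow> (sat s \<nu> \<psi> \<longleftrightarrow> \<Psi> s \<nu>)"
    using assms unfolding fo_definable_def by blast
  then show ?thesis unfolding fo_definable_def by (intro exI[of _ "FAnd \<phi> \<psi>"]) auto
qed

lemma fo_definable_neg:
  assumes "fo_definable V \<Phi>"
  shows "fo_definable V (\<lambda>s \<nu>. \<not> \<Phi> s \<nu>)"
proof -
  obtain \<phi> where "fv \<phi> \<subseteq> V" "\<forall>s \<nu>. pos_valuation \<nu> \<longrightarrow> (sat s \<nu> \<phi> \<longleftrightarrow> \<Phi> s \<nu>)"
    using assms unfolding fo_definable_def by blast
  then show ?thesis unfolding fo_definable_def by (intro exI[of _ "FNot \<phi>"]) auto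
qed

lemma fo_definable_disj:
  "fo_definable V \<Phi> \<Longrightarrow> fo_definable V \<Psi> \<Longrightarrow> fo_definable V (\<lambda>s \<nu>. \<Phi> s \<nu> \<or> \<Psi> s \<nu>)"
  using fo_definable_neg[OF fo_definable_conj[OF fo_definable_neg fo_definable_neg]] by simp

lemma fo_definable_const: "fo_definable V (\<lambda>s \<nu>. b)"
proof -
  have "fo_definable V (\<lambda>s \<nu>. False)"
    unfolding fo_definable_def by (intro exI[of _ "FEx 0 (FNot (FEq 0 0))"]) auto
  then show ?thesis using fo_definable_neg by (cases b) fastforce+
qed

lemma fo_definable_ex:
  assumes "fo_definable (insert z V) \<Phi>"
  shows "fo_definable V (\<lambda>s \<nu>. \<exists>p\<ge>1. \<Phi> s (\<nu>(z := p)))"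
proof -
  obtain \<phi> where "fv \<phi> \<subseteq> insert z V" "\<forall>s \<nu>. pos_valuation \<nu> \<longrightarrow> (sat s \<nu> \<phi> \<longleftrightarrow> \<Phi> s \<nu>)"
    using assms unfolding fo_definable_def by blast
  moreover have "pos_valuation (\<nu>(z := p))" if "pos_valuation \<nu>" "1 \<le> p" for \<nu> p
    using that by (auto simp: pos_valuation_def)
  ultimately show ?thesis unfolding fo_definable_def by (intro exI[of _ "FEx z \<phi>"]) auto
qed

lemma fo_definable_bex:
  "finite I \<Longrightarrow> (\<And>i. i \<in> I \<Longrightarrow> fo_definable V (\<Phi> i)) \<Longrightarrow> fo_definable V (\<lambda>s \<nu>. \<exists>i\<in>I. \<Phi> i s \<nu>)"
proof (induction I rule: finite_induct)
  case empty
  show ?case using fo_definable_const[of V False] by simp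
next
  case (insert a I)
  then show ?case using fo_definable_disj[of V "\<Phi> a"] by simp
qed

lemma fo_definable1_cong:
  assumes "fo_definable1 D" and "\<And>s x. 1 \<le> x \<Longrightarrow> D s x = D' s x"
  shows "fo_definable1 D'"
  unfolding fo_definable1_def
proof
  fix x
  show "fo_definable {x} (\<lambda>s \<nu>. D' s (\<nu> x))"
    by (rule fo_definable_cong[OF assms(1)[unfolded fo_definable1_def, rule_format, of x]])
      (simp add: assms(2) pos_valuation_def)
qed

lemma fo_definable2_cong:
  assumes "fo_definable2 D" and "\<And>s x y. 1 \<le> x \<Longrightarrow> 1 \<le> y \<Longrightarrow> D s x y = D' s x y"
  shows "fo_definable2 D'"
  unfolding fo_definable2_def
proof (intro allI)
  fix x y
  show "fo_definable {x, y} (\<lambda>s \<nu>. D' s (\<nu> x) (\<nu> y))"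
    by (rule fo_definable_cong[OF assms(1)[unfolded fo_definable2_def, rule_format, of x y]])
      (simp add: assms(2) pos_valuation_def)
qed

lemma fo_definable1_const: "fo_definable1 (\<lambda>s x. b)"
  unfolding fo_definable1_def by (auto intro: fo_definable_const)

lemma fo_definable1_letter: "fo_definable1 (\<lambda>s p. s (p - 1) = a)"
  unfolding fo_definable1_def fo_definable_def
proof
  fix x show "\<exists>\<phi>. fv \<phi> \<subseteq> {x} \<and> (\<forall>s \<nu>. pos_valuation \<nu> \<longrightarrow> sat s \<nu> \<phi> = (s (\<nu> x - 1) = a))"
    by (intro exI[of _ "FLetter a x"]) auto
qed

lemma fo_definable1_conj: "fo_definable1 D \<Longrightarrow> fo_definable1 E \<Longrightarrow> fo_definable1 (\<lambda>s x. D s x \<and> E s x)"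
  unfolding fo_definable1_def by (auto intro: fo_definable_conj)

lemma fo_definable1_disj: "fo_definable1 D \<Longrightarrow> fo_definable1 E \<Longrightarrow> fo_definable1 (\<lambda>s x. D s x \<or> E s x)"
  unfolding fo_definable1_def by (auto intro: fo_definable_disj)

lemma fo_definable1_neg: "fo_definable1 D \<Longrightarrow> fo_definable1 (\<lambda>s x. \<not> D s x)"
  unfolding fo_definable1_def by (auto intro: fo_definable_neg)

lemma fo_definable1_bex:
  "finite I \<Longrightarrow> (\<And>i. i \<in> I \<Longrightarrow> fo_definable1 (D i)) \<Longrightarrow> fo_definable1 (\<lambda>s x. \<exists>i\<in>I. D i s x)"
  unfolding fo_definable1_def by (auto intro: fo_definable_bex)

lemma fo_definable2_const: "fo_definable2 (\<lambda>s x y. b)"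
  unfolding fo_definable2_def by (auto intro: fo_definable_const)

lemma fo_definable2_less: "fo_definable2 (\<lambda>s x y. x < y)"
  unfolding fo_definable2_def fo_definable_def
proof (intro allI)
  fix x y show "\<exists>\<phi>. fv \<phi> \<subseteq> {x, y} \<and> (\<forall>s \<nu>. pos_valuation \<nu> \<longrightarrow> sat s \<nu> \<phi> = (\<nu> x < \<nu> y))"
    by (intro exI[of _ "FLess x y"]) auto
qed

lemma fo_definable2_conj: "fo_definable2 D \<Longrightarrow> fo_definable2 E \<Longrightarrow> fo_definable2 (\<lambda>s x y. D s x y \<and> E s x y)"
  unfolding fo_definable2_def by (auto intro: fo_definable_conj)

lemma fo_definable2_disj: "fo_definable2 D \<Longrightarrow> fo_definable2 E \<Longrightarrow> fo_definable2 (\<lambda>s x y. D s x y \<or> E s x y)"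
  unfolding fo_definable2_def by (auto intro: fo_definable_disj)

lemma fo_definable2_neg: "fo_definable2 D \<Longrightarrow> fo_definable2 (\<lambda>s x y. \<not> D s x y)"
  unfolding fo_definable2_def by (auto intro: fo_definable_neg)

lemma fo_definable2_bex:
  "finite I \<Longrightarrow> (\<And>i. i \<in> I \<Longrightarrow> fo_definable2 (D i)) \<Longrightarrow> fo_definable2 (\<lambda>s x y. \<exists>i\<in>I. D i s x y)"
  unfolding fo_definable2_def by (auto intro: fo_definable_bex)

lemma fo_definable2_le: "fo_definable2 (\<lambda>s x y. x \<le> y)"
proof -
  have "fo_definable2 (\<lambda>s x y. \<not> x < y)"
    by (rule fo_definable2_neg[OF fo_definable2_less])
  then have swapped: "fo_definable {a, b} (\<lambda>s \<nu>. \<not> \<nu> a < \<nu> b)" for a b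
    unfolding fo_definable2_def by blast
  show ?thesis unfolding fo_definable2_def
  proof (intro allI)
    fix x y :: nat
    have "{y, x} = {x, y}" by blast
    then show "fo_definable {x, y} (\<lambda>s \<nu>. \<nu> x \<le> \<nu> y)"
      using swapped[of y x] by (simp add: not_less)
  qed
qed

lemma fo_definable2_fst: "fo_definable1 D \<Longrightarrow> fo_definable2 (\<lambda>s x y. D s x)"
  unfolding fo_definable2_def fo_definable1_def by (auto intro: fo_definable_mono)

lemma fo_definable2_snd: "fo_definable1 D \<Longrightarrow> fo_definable2 (\<lambda>s x y. D s y)"
  unfolding fo_definable2_def fo_definable1_def by (auto intro: fo_definable_mono)

lemma fo_definable2_relcomp:
  assumes "fo_definable2 D" and "fo_definable2 E"
  shows "fo_definable2 (\<lambda>s x y. \<exists>z\<ge>1. D s x z \<and> E s z y)"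
  unfolding fo_definable2_def
proof (intro allI)
  fix x y :: nat
  define z where "z = x + y + 1"
  have "fo_definable (insert z {x, y}) (\<lambda>s \<nu>. D s (\<nu> x) (\<nu> z) \<and> E s (\<nu> z) (\<nu> y))"
  proof (rule fo_definable_conj)
    show "fo_definable (insert z {x, y}) (\<lambda>s \<nu>. D s (\<nu> x) (\<nu> z))"
      by (rule fo_definable_mono[OF assms(1)[unfolded fo_definable2_def, rule_format, of x z]]) auto
    show "fo_definable (insert z {x, y}) (\<lambda>s \<nu>. E s (\<nu> z) (\<nu> y))"
      by (rule fo_definable_mono[OF assms(2)[unfolded fo_definable2_def, rule_format, of z y]]) auto
  qed
  from fo_definable_ex[OF this] show "fo_definable {x, y} (\<lambda>s \<nu>. \<exists>z\<ge>1. D s (\<nu> x) z \<and> E s z (\<nu> y))"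
    by (simp add: z_def)
qed

lemma fo_definable1_ex:
  assumes "fo_definable2 E"
  shows "fo_definable1 (\<lambda>s y. \<exists>x\<ge>1. E s x y)"
  unfolding fo_definable1_def
proof (intro allI)
  fix y :: nat
  have "fo_definable (insert (Suc y) {y}) (\<lambda>s \<nu>. E s (\<nu> (Suc y)) (\<nu> y))"
    using assms unfolding fo_definable2_def by auto
  from fo_definable_ex[OF this] show "fo_definable {y} (\<lambda>s \<nu>. \<exists>x\<ge>1. E s x (\<nu> y))"
    by simp
qed

lemma fo_definable1_at_first:
  assumes "fo_definable2 D"
  shows "fo_definable1 (\<lambda>s y. D s 1 y)"
proof -
  have "fo_definable1 (\<lambda>s y. \<exists>x\<ge>1. \<not> (\<exists>w\<ge>1. w < x) \<and> D s x y)"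
    by (intro fo_definable1_ex fo_definable2_conj fo_definable2_fst fo_definable1_neg fo_definable1_ex
        fo_definable2_less assms)
  moreover have "(\<not> (\<exists>w\<ge>1. w < x)) \<longleftrightarrow> \<not> 1 < x" for x :: nat
    by (meson le_less_trans order_refl)
  then have "(\<exists>x\<ge>1. \<not> (\<exists>w\<ge>1. w < x) \<and> D s x y) \<longleftrightarrow> D s 1 y" for s y
    by (auto simp: not_less dest: le_antisym)
  ultimately show ?thesis by simp
qed

section \<open>Products over marked positions and local divisors\<close>

definition aperiodic_monoid :: "('m, 'b) monoid_scheme \<Rightarrow> bool" where
  "aperiodic_monoid G \<longleftrightarrow> monoid G \<and> (\<forall>x\<in>carrier G. \<exists>n::nat. x [^]\<^bsub>G\<^esub> n = x [^]\<^bsub>G\<^esub> Suc n)"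

text \<open>\<open>marked_prod G P lab x y\<close> multiplies the labels of the positions \<open>p\<close> with \<open>P p\<close> in the
  half-open interval \<open>x < p \<le> y\<close>, from left to right.\<close>

fun marked_prod :: "('m, 'b) monoid_scheme \<Rightarrow> (nat \<Rightarrow> bool) \<Rightarrow> (nat \<Rightarrow> 'm) \<Rightarrow> nat \<Rightarrow> nat \<Rightarrow> 'm" where
  "marked_prod G P lab x 0 = \<one>\<^bsub>G\<^esub>"
| "marked_prod G P lab x (Suc y) =
     (if Suc y \<le> x then \<one>\<^bsub>G\<^esub>
      else if P (Suc y) then marked_prod G P lab x y \<otimes>\<^bsub>G\<^esub> lab (Suc y)
      else marked_prod G P lab x y)"

definition labels_in :: "'m set \<Rightarrow> (nat \<Rightarrow> bool) \<Rightarrow> (nat \<Rightarrow> 'm) \<Rightarrow> nat \<Rightarrow> nat \<Rightarrow> bool" where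
  "labels_in A P lab x y \<longleftrightarrow> (\<forall>p. x < p \<and> p \<le> y \<and> P p \<longrightarrow> lab p \<in> A)"

lemma labels_in_mono: "labels_in A P lab x y \<Longrightarrow> A \<subseteq> B \<Longrightarrow> labels_in B P lab x y"
  unfolding labels_in_def by blast

lemma labels_in_subinterval:
  "labels_in A P lab x y \<Longrightarrow> x \<le> x' \<Longrightarrow> y' \<le> y \<Longrightarrow> labels_in A P lab x' y'"
  unfolding labels_in_def by auto

lemma marked_prod_empty: "y \<le> x \<Longrightarrow> marked_prod G P lab x y = \<one>\<^bsub>G\<^esub>"
  by (induction y) auto

lemma marked_prod_unmarked:
  "(\<And>p. x < p \<Longrightarrow> p \<le> y \<Longrightarrow> \<not> P p) \<Longrightarrow> marked_prod G P lab x y = \<one>\<^bsub>G\<^esub>"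
  by (induction y) auto

context monoid
begin

lemma marked_prod_closed:
  "labels_in (carrier G) P lab x y \<Longrightarrow> marked_prod G P lab x y \<in> carrier G"
proof (induction y)
  case (Suc y)
  then have "marked_prod G P lab x y \<in> carrier G"
    using labels_in_subinterval by fastforce
  with Suc.prems show ?case by (auto simp: labels_in_def)
qed simp

lemma marked_prod_split:
  assumes "labels_in (carrier G) P lab x y" and "x \<le> z" and "z \<le> y"
  shows "marked_prod G P lab x y = marked_prod G P lab x z \<otimes> marked_prod G P lab z y"
  using assms
proof (induction y)
  case 0
  then show ?case by (simp add: marked_prod_empty)
next
  case (Suc y)
  show ?case
  proof (cases "z = Suc y")
    case True
    then show ?thesis using marked_prod_closed[OF Suc.prems(1)]
      by (simp add: marked_prod_empty del: marked_prod.simps)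
  next
    case False
    then have zy: "z \<le> y" using Suc.prems by auto
    have lab: "labels_in (carrier G) P lab x y" using Suc.prems(1) labels_in_subinterval by fastforce
    have "marked_prod G P lab x z \<in> carrier G" "marked_prod G P lab z y \<in> carrier G"
      using marked_prod_closed[OF labels_in_subinterval[OF lab order_refl zy]]
        marked_prod_closed[OF labels_in_subinterval[OF lab Suc.prems(2) order_refl]] by auto
    moreover have "P (Suc y) \<Longrightarrow> lab (Suc y) \<in> carrier G"
      using Suc.prems zy unfolding labels_in_def by auto
    ultimately show ?thesis using Suc.IH[OF lab Suc.prems(2) zy] zy Suc.prems(2)
      by (auto simp: m_assoc)
  qed
qed

lemma marked_prod_labels_one: "labels_in {\<one>} P lab x y \<Longrightarrow> marked_prod G P lab x y = \<one>"
proof (induction y)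
  case (Suc y)
  then have "marked_prod G P lab x y = \<one>" using labels_in_subinterval by fastforce
  with Suc.prems show ?case by (auto simp: labels_in_def)
qed simp

end

definition left_factor :: "('m, 'b) monoid_scheme \<Rightarrow> 'm \<Rightarrow> 'm \<Rightarrow> 'm" where
  "left_factor G c u = (SOME z. z \<in> carrier G \<and> u = z \<otimes>\<^bsub>G\<^esub> c)"

text \<open>Diekert and Gastin's local divisor at \<open>c\<close>: the set \<open>cM \<inter> Mc\<close> with product
  \<open>xc \<circ> cy = xcy\<close> and unit \<open>c\<close>. The product does not depend on the chosen left factor \<open>x\<close>
  because the second operand lies in \<open>cM\<close>.\<close>

definition local_divisor :: "('m, 'b) monoid_scheme \<Rightarrow> 'm \<Rightarrow> 'm monoid" where
  "local_divisor G c =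
     \<lparr>carrier = {u. (\<exists>y\<in>carrier G. u = c \<otimes>\<^bsub>G\<^esub> y) \<and> (\<exists>z\<in>carrier G. u = z \<otimes>\<^bsub>G\<^esub> c)},
      mult = (\<lambda>u v. left_factor G c u \<otimes>\<^bsub>G\<^esub> v),
      one = c\<rparr>"

lemma local_divisor_simps:
  "carrier (local_divisor G c) = {u. (\<exists>y\<in>carrier G. u = c \<otimes>\<^bsub>G\<^esub> y) \<and> (\<exists>z\<in>carrier G. u = z \<otimes>\<^bsub>G\<^esub> c)}"
  "u \<otimes>\<^bsub>local_divisor G c\<^esub> v = left_factor G c u \<otimes>\<^bsub>G\<^esub> v"
  "\<one>\<^bsub>local_divisor G c\<^esub> = c"
  by (simp_all add: local_divisor_def)

lemma left_factor:
  assumes "u \<in> carrier (local_divisor G c)"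
  shows "left_factor G c u \<in> carrier G" and "u = left_factor G c u \<otimes>\<^bsub>G\<^esub> c"
proof -
  have "\<exists>z. z \<in> carrier G \<and> u = z \<otimes>\<^bsub>G\<^esub> c" using assms by (auto simp: local_divisor_simps)
  then have "left_factor G c u \<in> carrier G \<and> u = left_factor G c u \<otimes>\<^bsub>G\<^esub> c"
    unfolding left_factor_def by (rule someI_ex)
  then show "left_factor G c u \<in> carrier G" and "u = left_factor G c u \<otimes>\<^bsub>G\<^esub> c" by auto
qed

context monoid
begin

lemma local_divisor_subset: "c \<in> carrier G \<Longrightarrow> carrier (local_divisor G c) \<subseteq> carrier G"
  by (auto simp: local_divisor_simps)

lemma in_local_divisor:
  assumes "c \<in> carrier G" and "x \<in> carrier G"
  shows "c \<otimes> x \<otimes> c \<in> carrier (local_divisor G c)"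
proof -
  have "c \<otimes> x \<otimes> c = c \<otimes> (x \<otimes> c)" using assms by (simp add: m_assoc)
  then show ?thesis using assms unfolding local_divisor_simps by blast
qed

lemma local_divisor_mult:
  assumes "c \<in> carrier G" "u \<in> carrier (local_divisor G c)" "y \<in> carrier G"
  shows "u \<otimes>\<^bsub>local_divisor G c\<^esub> (c \<otimes> y) = u \<otimes> y"
proof -
  have "u \<otimes> y = left_factor G c u \<otimes> c \<otimes> y" using left_factor(2)[OF assms(2)] by simp
  then show ?thesis using left_factor(1)[OF assms(2)] assms by (simp add: local_divisor_simps m_assoc)
qed

lemma monoid_local_divisor:
  assumes c: "c \<in> carrier G"
  shows "monoid (local_divisor G c)"
proof -
  let ?H = "local_divisor G c"
  let ?z = "left_factor G c"
  have closed: "u \<otimes>\<^bsub>?H\<^esub> v \<in> carrier ?H" if u: "u \<in> carrier ?H" and v: "v \<in> carrier ?H" for u v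
  proof -
    obtain yu where yu: "yu \<in> carrier G" "u = c \<otimes> yu" using u by (auto simp: local_divisor_simps)
    obtain yv where yv: "yv \<in> carrier G" "v = c \<otimes> yv" using v by (auto simp: local_divisor_simps)
    obtain zv where zv: "zv \<in> carrier G" "v = zv \<otimes> c" using v by (auto simp: local_divisor_simps)
    have "u \<otimes>\<^bsub>?H\<^esub> v = c \<otimes> (yu \<otimes> yv)" using local_divisor_mult[OF c u yv(1)] yu yv c by (simp add: m_assoc)
    moreover have "u \<otimes>\<^bsub>?H\<^esub> v = (?z u \<otimes> zv) \<otimes> c"
      using left_factor(1)[OF u] zv c by (simp add: local_divisor_simps m_assoc)
    ultimately show ?thesis using yu yv zv left_factor(1)[OF u]
      unfolding local_divisor_simps(1) by blast
  qed
  have "c = c \<otimes> \<one>" "c = \<one> \<otimes> c" using c by simp_all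
  then have c_in: "c \<in> carrier ?H" unfolding local_divisor_simps(1) by blast
  show ?thesis
  proof (rule monoidI)
    fix u v w assume u: "u \<in> carrier ?H" and v: "v \<in> carrier ?H" and w: "w \<in> carrier ?H"
    obtain yw where yw: "yw \<in> carrier G" "w = c \<otimes> yw" using w by (auto simp: local_divisor_simps)
    have "v \<in> carrier G" using v local_divisor_subset c by blast
    then show "u \<otimes>\<^bsub>?H\<^esub> v \<otimes>\<^bsub>?H\<^esub> w = u \<otimes>\<^bsub>?H\<^esub> (v \<otimes>\<^bsub>?H\<^esub> w)"
      using local_divisor_mult[OF c closed[OF u v] yw(1)] local_divisor_mult[OF c v yw(1)] left_factor[OF u] yw
      by (simp add: local_divisor_simps m_assoc)
  next
    fix v assume v: "v \<in> carrier ?H"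
    obtain yv where yv: "yv \<in> carrier G" "v = c \<otimes> yv" using v by (auto simp: local_divisor_simps)
    show "\<one>\<^bsub>?H\<^esub> \<otimes>\<^bsub>?H\<^esub> v = v"
      using local_divisor_mult[OF c c_in yv(1)] yv by (simp add: local_divisor_simps)
    show "v \<otimes>\<^bsub>?H\<^esub> \<one>\<^bsub>?H\<^esub> = v"
      using left_factor[OF v] by (simp add: local_divisor_simps)
  qed (use closed c_in in \<open>auto simp: local_divisor_simps\<close>)
qed

lemma local_divisor_pow:
  assumes c: "c \<in> carrier G" and u: "u \<in> carrier (local_divisor G c)"
  shows "u [^]\<^bsub>local_divisor G c\<^esub> (n::nat) = left_factor G c u [^] n \<otimes> c"
proof (induction n)
  case 0
  then show ?case using c by (simp add: local_divisor_simps)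
next
  case (Suc n)
  interpret H: monoid "local_divisor G c" by (rule monoid_local_divisor[OF c])
  have z: "left_factor G c u \<in> carrier G" by (rule left_factor(1)[OF u])
  have "u [^]\<^bsub>local_divisor G c\<^esub> Suc n = u \<otimes>\<^bsub>local_divisor G c\<^esub> u [^]\<^bsub>local_divisor G c\<^esub> n"
    by (rule H.nat_pow_Suc2[OF u])
  also have "\<dots> = left_factor G c u \<otimes> (left_factor G c u [^] n \<otimes> c)"
    by (simp only: local_divisor_simps Suc.IH)
  also have "\<dots> = left_factor G c u [^] Suc n \<otimes> c"
    by (simp only: nat_pow_Suc2[OF z] m_assoc[OF z nat_pow_closed[OF z] c])
  finally show ?case .
qed

lemma aperiodic_local_divisor:
  assumes "aperiodic_monoid G" and c: "c \<in> carrier G"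
  shows "aperiodic_monoid (local_divisor G c)"
  unfolding aperiodic_monoid_def
proof (intro conjI ballI)
  show "monoid (local_divisor G c)" by (rule monoid_local_divisor[OF c])
  fix u assume u: "u \<in> carrier (local_divisor G c)"
  obtain n :: nat where "left_factor G c u [^] n = left_factor G c u [^] Suc n"
    using assms(1) left_factor(1)[OF u] unfolding aperiodic_monoid_def by blast
  then show "\<exists>n::nat. u [^]\<^bsub>local_divisor G c\<^esub> n = u [^]\<^bsub>local_divisor G c\<^esub> Suc n"
    using local_divisor_pow[OF c u] by metis
qed

text \<open>If \<open>cy = 1\<close> then \<open>c\<^sup>n y\<^sup>n = 1\<close> for all \<open>n\<close>, so \<open>c = c\<^sup>n\<^sup>+\<^sup>1 y\<^sup>n = c\<^sup>n y\<^sup>n = 1\<close> once \<open>c\<^sup>n = c\<^sup>n\<^sup>+\<^sup>1\<close>.\<close>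

lemma one_notin_local_divisor:
  assumes "aperiodic_monoid G" and c: "c \<in> carrier G" and "c \<noteq> \<one>"
  shows "\<one> \<notin> carrier (local_divisor G c)"
proof
  assume "\<one> \<in> carrier (local_divisor G c)"
  then obtain y where y: "y \<in> carrier G" "c \<otimes> y = \<one>" by (auto simp: local_divisor_simps)
  have inverse_pows: "c [^] n \<otimes> y [^] n = \<one>" for n :: nat
  proof (induction n)
    case (Suc n)
    have "c [^] Suc n \<otimes> y [^] Suc n = c [^] n \<otimes> c \<otimes> (y \<otimes> y [^] n)"
      by (simp only: nat_pow_Suc[of c] nat_pow_Suc2[OF y(1)])
    also have "\<dots> = c [^] n \<otimes> (c \<otimes> y) \<otimes> y [^] n"
      using c y(1) by (simp add: m_assoc)
    finally show ?case using Suc.IH y c by simp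
  qed simp
  obtain n :: nat where n: "c [^] n = c [^] Suc n" using assms(1) c unfolding aperiodic_monoid_def by blast
  have "c = c \<otimes> (c [^] n \<otimes> y [^] n)" using inverse_pows[of n] c by simp
  also have "\<dots> = c [^] Suc n \<otimes> y [^] n"
    using c y by (simp only: nat_pow_Suc2[OF c] m_assoc nat_pow_closed)
  also have "\<dots> = \<one>" using n inverse_pows by simp
  finally show False using assms(3) by contradiction
qed

lemma card_local_divisor_less:
  assumes "aperiodic_monoid G" "finite (carrier G)" "c \<in> carrier G" "c \<noteq> \<one>"
  shows "card (carrier (local_divisor G c)) < card (carrier G)"
  using one_notin_local_divisor[OF assms(1,3,4)] local_divisor_subset[OF assms(3)]
  by (intro psubset_card_mono[OF assms(2)]) blast

end

section \<open>Cutting a product at the marks of one label\<close>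

definition first_mark_after :: "(nat \<Rightarrow> bool) \<Rightarrow> nat \<Rightarrow> nat \<Rightarrow> bool" where
  "first_mark_after Q x p \<longleftrightarrow> x < p \<and> Q p \<and> (\<forall>w. x < w \<and> w < p \<longrightarrow> \<not> Q w)"

definition last_mark_before :: "(nat \<Rightarrow> bool) \<Rightarrow> nat \<Rightarrow> nat \<Rightarrow> bool" where
  "last_mark_before Q p y \<longleftrightarrow> p < y \<and> Q p \<and> (\<forall>w. p < w \<and> w < y \<longrightarrow> \<not> Q w)"

lemma first_mark_after_exists:
  assumes "x < w" "w \<le> y" "Q w"
  shows "\<exists>p. first_mark_after Q x p \<and> p \<le> y"
proof -
  define p where "p = (LEAST p. x < p \<and> Q p)"
  have "x < p \<and> Q p" "p \<le> w" using LeastI[of "\<lambda>p. x < p \<and> Q p"] Least_le[of "\<lambda>p. x < p \<and> Q p"] assms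
    unfolding p_def by blast+
  moreover have "\<not> Q v" if "x < v" "v < p" for v using not_less_Least[of v "\<lambda>p. x < p \<and> Q p"] that
    unfolding p_def by blast
  ultimately show ?thesis using assms unfolding first_mark_after_def by (intro exI[of _ p]) auto
qed

lemma last_mark_before_exists:
  assumes "x \<le> w" "w < y" "Q w"
  shows "\<exists>p. last_mark_before Q p y \<and> x \<le> p"
proof -
  define p where "p = (GREATEST p. p < y \<and> Q p)"
  have "p < y \<and> Q p" "w \<le> p"
    using GreatestI_nat[of "\<lambda>p. p < y \<and> Q p" w y] Greatest_le_nat[of "\<lambda>p. p < y \<and> Q p" w y] assms
    unfolding p_def by auto
  moreover have "\<not> Q v" if "p < v" "v < y" for v
    using Greatest_le_nat[of "\<lambda>p. p < y \<and> Q p" v y] that unfolding p_def by fastforce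
  ultimately show ?thesis using assms unfolding last_mark_before_def by (intro exI[of _ p]) auto
qed

lemma last_mark_before_unique: "last_mark_before Q p y \<Longrightarrow> last_mark_before Q p' y \<Longrightarrow> p = p'"
  unfolding last_mark_before_def by (metis linorder_neqE_nat)

text \<open>The relabelling behind the local divisor: a position \<open>p\<close> marked by \<open>c\<close> gets the label
  \<open>c t c\<close>, where \<open>t\<close> is the product of the block between the previous \<open>c\<close>-mark and \<open>p\<close>.
  The default \<open>c\<close> only occurs where the block leaves \<open>B\<close>, which is never the case in an
  interval labelled by \<open>A = B \<union> {c}\<close>.\<close>

definition block_label :: "('m, 'b) monoid_scheme \<Rightarrow> 'm \<Rightarrow> 'm set \<Rightarrow> (nat \<Rightarrow> bool) \<Rightarrow> (nat \<Rightarrow> 'm) \<Rightarrow> nat \<Rightarrow> 'm" where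
  "block_label G c B P lab p =
     (let Q = (\<lambda>q. P q \<and> lab q = c) in
      if \<exists>q\<ge>1. last_mark_before Q q p \<and> labels_in B P lab q (p - 1)
      then c \<otimes>\<^bsub>G\<^esub> marked_prod G P lab (THE q. last_mark_before Q q p) (p - 1) \<otimes>\<^bsub>G\<^esub> c
      else c)"

lemma block_label_eq:
  assumes "last_mark_before (\<lambda>q. P q \<and> lab q = c) q p" "1 \<le> q" "labels_in B P lab q (p - 1)"
  shows "block_label G c B P lab p = c \<otimes>\<^bsub>G\<^esub> marked_prod G P lab q (p - 1) \<otimes>\<^bsub>G\<^esub> c"
proof -
  have "(THE q. last_mark_before (\<lambda>q. P q \<and> lab q = c) q p) = q"
    using assms(1) last_mark_before_unique by blast
  then show ?thesis using assms unfolding block_label_def Let_def by auto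
qed

lemma block_label_default:
  assumes "\<not> (\<exists>q\<ge>1. last_mark_before (\<lambda>q. P q \<and> lab q = c) q p \<and> labels_in B P lab q (p - 1))"
  shows "block_label G c B P lab p = c"
  using assms unfolding block_label_def Let_def by auto

lemma labels_in_unmarked:
  assumes "labels_in (insert c B) P lab x y" "x \<le> a" "b \<le> y"
    and "\<And>w. a < w \<Longrightarrow> w \<le> b \<Longrightarrow> \<not> (P w \<and> lab w = c)"
  shows "labels_in B P lab a b"
  unfolding labels_in_def
proof (intro allI impI)
  fix p assume p: "a < p \<and> p \<le> b \<and> P p"
  then have "lab p \<in> insert c B" using assms(1-3) unfolding labels_in_def by auto
  moreover have "lab p \<noteq> c" using assms(4) p by blast
  ultimately show "lab p \<in> B" by blast
qed

context monoid
begin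

lemma block_label_closed:
  assumes "c \<in> carrier G" "B \<subseteq> carrier G"
  shows "block_label G c B P lab p \<in> carrier (local_divisor G c)"
proof -
  have "c \<in> carrier (local_divisor G c)"
    using monoid.one_closed[OF monoid_local_divisor[OF assms(1)]] by (simp add: local_divisor_simps)
  moreover have "c \<otimes> marked_prod G P lab q (p - 1) \<otimes> c \<in> carrier (local_divisor G c)"
    if "labels_in B P lab q (p - 1)" for q
    using in_local_divisor[OF assms(1) marked_prod_closed] labels_in_mono[OF that assms(2)] by blast
  ultimately show ?thesis
    by (cases "\<exists>q\<ge>1. last_mark_before (\<lambda>q. P q \<and> lab q = c) q p \<and> labels_in B P lab q (p - 1)")
      (auto simp: block_label_eq block_label_default)
qed

lemma marked_prod_local_divisor_block:
  assumes c: "c \<in> carrier G" and B: "B \<subseteq> carrier G"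
    and q: "last_mark_before (\<lambda>p. P p \<and> lab p = c) q y" "1 \<le> q" and block: "labels_in B P lab q (y - 1)"
    and y: "P y" "lab y = c"
  shows "marked_prod (local_divisor G c) (\<lambda>p. P p \<and> lab p = c) (block_label G c B P lab) q y
           = c \<otimes> marked_prod G P lab q (y - 1) \<otimes> c"
proof -
  let ?H = "local_divisor G c" and ?Q = "\<lambda>p. P p \<and> lab p = c" and ?L = "block_label G c B P lab"
  interpret H: monoid ?H by (rule monoid_local_divisor[OF c])
  obtain y0 where y0: "y = Suc y0" using q(1) unfolding last_mark_before_def by (cases y) auto
  have "marked_prod ?H ?Q ?L q y0 = c"
    using q(1) y0 by (subst marked_prod_unmarked) (auto simp: last_mark_before_def local_divisor_simps)
  then have "marked_prod ?H ?Q ?L q y = c \<otimes>\<^bsub>?H\<^esub> ?L y"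
    using q(1) y y0 unfolding last_mark_before_def by simp
  also have "\<dots> = ?L y"
    using H.l_one[OF block_label_closed[OF c B], unfolded local_divisor_simps(3)] by blast
  also have "\<dots> = c \<otimes> marked_prod G P lab q (y - 1) \<otimes> c"
    by (rule block_label_eq[OF q block])
  finally show ?thesis .
qed

lemma marked_prod_local_divisor:
  assumes c: "c \<in> carrier G" and B: "B \<subseteq> carrier G"
    and lab: "labels_in (insert c B) P lab x y"
    and x: "1 \<le> x" "P x" "lab x = c" and y: "x \<le> y" "P y" "lab y = c"
  shows "marked_prod (local_divisor G c) (\<lambda>p. P p \<and> lab p = c) (block_label G c B P lab) x y
           = c \<otimes> marked_prod G P lab x y"
  using lab y
proof (induction y rule: less_induct)
  case (less y)
  let ?H = "local_divisor G c" and ?Q = "\<lambda>p. P p \<and> lab p = c" and ?L = "block_label G c B P lab"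
  interpret H: monoid ?H by (rule monoid_local_divisor[OF c])
  have labA: "labels_in (carrier G) P lab x y" using less.prems(1) c B by (auto intro: labels_in_mono)
  have labH: "labels_in (carrier ?H) ?Q ?L a b" for a b
    using block_label_closed[OF c B] unfolding labels_in_def by blast
  show ?case
  proof (cases "y = x")
    case True
    then show ?thesis using c by (simp add: marked_prod_empty local_divisor_simps)
  next
    case False
    then obtain q where q: "last_mark_before ?Q q y" "x \<le> q"
      using last_mark_before_exists[of x x y ?Q] less.prems x by auto
    have qy: "q < y" "P q" "lab q = c" using q(1) unfolding last_mark_before_def by auto
    have block: "labels_in B P lab q (y - 1)"
      by (rule labels_in_unmarked[OF less.prems(1) q(2)]) (use q(1) in \<open>auto simp: last_mark_before_def\<close>)
    have t: "marked_prod G P lab q (y - 1) \<in> carrier G"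
      using marked_prod_closed labels_in_mono[OF block B] by blast
    have last_block: "marked_prod ?H ?Q ?L q y = c \<otimes> marked_prod G P lab q (y - 1) \<otimes> c"
      using marked_prod_local_divisor_block[OF c B q(1) _ block less.prems(3,4)] x(1) q(2) by simp
    have IH: "marked_prod ?H ?Q ?L x q = c \<otimes> marked_prod G P lab x q"
      using less.IH[OF qy(1) labels_in_subinterval[OF less.prems(1)] q(2) qy(2,3)] qy(1) by simp
    have "marked_prod ?H ?Q ?L x q \<in> carrier ?H" by (rule H.marked_prod_closed[OF labH])
    then have u: "c \<otimes> marked_prod G P lab x q \<in> carrier ?H" using IH by simp
    have pxq: "marked_prod G P lab x q \<in> carrier G"
      by (rule marked_prod_closed[OF labels_in_subinterval[OF labA order_refl]]) (use qy in simp)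
    have pqy: "marked_prod G P lab q y \<in> carrier G"
      by (rule marked_prod_closed[OF labels_in_subinterval[OF labA q(2) order_refl]])
    have "marked_prod ?H ?Q ?L x y = marked_prod ?H ?Q ?L x q \<otimes>\<^bsub>?H\<^esub> marked_prod ?H ?Q ?L q y"
      by (rule H.marked_prod_split[OF labH q(2) less_imp_le[OF qy(1)]])
    also have "\<dots> = (c \<otimes> marked_prod G P lab x q) \<otimes>\<^bsub>?H\<^esub> (c \<otimes> (marked_prod G P lab q (y - 1) \<otimes> c))"
      using IH last_block m_assoc[OF c t c] by simp
    also have "\<dots> = c \<otimes> marked_prod G P lab x q \<otimes> (marked_prod G P lab q (y - 1) \<otimes> c)"
      by (rule local_divisor_mult[OF c u]) (use t c in simp)
    also have "marked_prod G P lab q (y - 1) \<otimes> c = marked_prod G P lab q y"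
      using qy(1) less.prems(3,4) by (cases y) auto
    also have "c \<otimes> marked_prod G P lab x q \<otimes> marked_prod G P lab q y = c \<otimes> marked_prod G P lab x y"
      using marked_prod_split[OF labA q(2) less_imp_le[OF qy(1)]] by (simp add: m_assoc[OF c pxq pqy])
    finally show ?thesis .
  qed
qed

lemma marked_prod_decompose:
  assumes c: "c \<in> carrier G" and B: "B \<subseteq> carrier G"
    and lab: "labels_in (insert c B) P lab x y"
    and first: "first_mark_after (\<lambda>p. P p \<and> lab p = c) x x'"
    and last: "last_mark_before (\<lambda>p. P p \<and> lab p = c) y' (Suc y)"
    and "x' \<le> y'"
  shows "marked_prod G P lab x y = marked_prod G P lab x (x' - 1)
           \<otimes> marked_prod (local_divisor G c) (\<lambda>p. P p \<and> lab p = c) (block_label G c B P lab) x' y'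
           \<otimes> marked_prod G P lab y' y"
proof -
  have x': "x < x'" "P x'" "lab x' = c" using first unfolding first_mark_after_def by auto
  have y': "y' \<le> y" "P y'" "lab y' = c" using last unfolding last_mark_before_def by auto
  have labA: "labels_in (carrier G) P lab x y" using lab c B by (auto intro: labels_in_mono)
  have closed: "marked_prod G P lab a b \<in> carrier G" if "x \<le> a" "b \<le> y" for a b
    using marked_prod_closed[OF labels_in_subinterval[OF labA that]] .
  obtain x0 where x0: "x' = Suc x0" using x' by (cases x') auto
  have "marked_prod G P lab x y = marked_prod G P lab x x' \<otimes> (marked_prod G P lab x' y' \<otimes> marked_prod G P lab y' y)"
    using marked_prod_split[OF labA, of x'] marked_prod_split[OF labels_in_subinterval[OF labA], of x' y y']
      x' y' \<open>x' \<le> y'\<close> by simp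
  also have "marked_prod G P lab x x' = marked_prod G P lab x (x' - 1) \<otimes> c"
    using x0 x' by simp
  finally show ?thesis
    using marked_prod_local_divisor[OF c B labels_in_subinterval[OF lab] _ x'(2,3) \<open>x' \<le> y'\<close> y'(2,3)]
      x' y' closed c \<open>x' \<le> y'\<close> x0 by (simp add: m_assoc)
qed

lemma marked_prod_eq_iff_decomposition:
  assumes c: "c \<in> carrier G" and B: "B \<subseteq> carrier G"
    and lab: "labels_in (insert c B) P lab x y"
    and mark: "x < w" "w \<le> y" "P w" "lab w = c"
  shows "marked_prod G P lab x y = m \<longleftrightarrow>
    (\<exists>x' y'. first_mark_after (\<lambda>p. P p \<and> lab p = c) x x' \<and> x' \<le> y'
       \<and> last_mark_before (\<lambda>p. P p \<and> lab p = c) y' (Suc y)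
       \<and> marked_prod G P lab x (x' - 1)
          \<otimes> marked_prod (local_divisor G c) (\<lambda>p. P p \<and> lab p = c) (block_label G c B P lab) x' y'
          \<otimes> marked_prod G P lab y' y = m)"
    (is "_ \<longleftrightarrow> (\<exists>x' y'. ?F x' \<and> x' \<le> y' \<and> ?L y' \<and> ?prod x' y' = m)")
proof
  assume "marked_prod G P lab x y = m"
  obtain x' where x': "?F x'" "x' \<le> y" using first_mark_after_exists[of x w y "\<lambda>p. P p \<and> lab p = c"] mark by blast
  have "x' \<le> w"
  proof (rule ccontr)
    assume "\<not> x' \<le> w"
    then show False using x'(1) mark unfolding first_mark_after_def by auto
  qed
  then obtain y' where y': "?L y'" "x' \<le> y'"
    using last_mark_before_exists[of x' w "Suc y" "\<lambda>p. P p \<and> lab p = c"] mark by auto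
  show "\<exists>x' y'. ?F x' \<and> x' \<le> y' \<and> ?L y' \<and> ?prod x' y' = m"
    using marked_prod_decompose[OF c B lab x'(1) y'] x' y' \<open>marked_prod G P lab x y = m\<close> by auto
next
  assume "\<exists>x' y'. ?F x' \<and> x' \<le> y' \<and> ?L y' \<and> ?prod x' y' = m"
  then obtain x' y' where "?F x'" "x' \<le> y'" "?L y'" "?prod x' y' = m" by blast
  then show "marked_prod G P lab x y = m" using marked_prod_decompose[OF c B lab] by simp
qed

lemma marked_prod_eq_iff_split_at_marks:
  assumes c: "c \<in> carrier G" and B: "B \<subseteq> carrier G"
    and lab: "labels_in (insert c B) P lab x y"
  defines "Q \<equiv> \<lambda>p. P p \<and> lab p = c" and "H \<equiv> local_divisor G c" and "L \<equiv> block_label G c B P lab"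
  shows "marked_prod G P lab x y = m \<longleftrightarrow>
    ((\<exists>w\<ge>1. x < w \<and> w \<le> y \<and> Q w) \<and>
      (\<exists>m1\<in>carrier G. \<exists>\<pi>\<in>carrier H. \<exists>m2\<in>carrier G. m1 \<otimes> \<pi> \<otimes> m2 = m \<and>
        (\<exists>x'\<ge>1. (first_mark_after Q x x' \<and> x < x'
            \<and> labels_in B P lab x (x' - 1) \<and> marked_prod G P lab x (x' - 1) = m1)
          \<and> (\<exists>y'\<ge>1. ((labels_in (carrier H) Q L x' y' \<and> marked_prod H Q L x' y' = \<pi>) \<and> x' \<le> y')
            \<and> last_mark_before Q y' (Suc y) \<and> labels_in B P lab y' y \<and> marked_prod G P lab y' y = m2))))
    \<or> (\<not> (\<exists>w\<ge>1. x < w \<and> w \<le> y \<and> Q w) \<and> labels_in B P lab x y \<and> marked_prod G P lab x y = m)"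
    (is "_ \<longleftrightarrow> (?marked \<and> ?split) \<or> (\<not> ?marked \<and> _)")
proof (cases ?marked)
  case False
  have "labels_in B P lab x y" by (rule labels_in_unmarked[OF lab]) (use False in \<open>auto simp: Q_def\<close>)
  then show ?thesis using False by blast
next
  case True
  then obtain w where w: "x < w" "w \<le> y" "P w" "lab w = c" unfolding Q_def by blast
  have labH: "labels_in (carrier H) Q L a b" for a b
    using block_label_closed[OF c B] unfolding labels_in_def H_def L_def by blast
  have "marked_prod G P lab x y = m \<longleftrightarrow> (\<exists>x' y'. first_mark_after Q x x' \<and> x' \<le> y'
      \<and> last_mark_before Q y' (Suc y)
      \<and> marked_prod G P lab x (x' - 1) \<otimes> marked_prod H Q L x' y' \<otimes> marked_prod G P lab y' y = m)"
    unfolding Q_def H_def L_def by (rule marked_prod_eq_iff_decomposition[OF c B lab w])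
  also have "\<dots> \<longleftrightarrow> ?split"
  proof
    assume "\<exists>x' y'. first_mark_after Q x x' \<and> x' \<le> y' \<and> last_mark_before Q y' (Suc y)
      \<and> marked_prod G P lab x (x' - 1) \<otimes> marked_prod H Q L x' y' \<otimes> marked_prod G P lab y' y = m"
    then obtain x' y' where x': "first_mark_after Q x x'" and "x' \<le> y'" and y': "last_mark_before Q y' (Suc y)"
      and eq: "marked_prod G P lab x (x' - 1) \<otimes> marked_prod H Q L x' y' \<otimes> marked_prod G P lab y' y = m"
      by blast
    have "x < x'" "y' \<le> y" using x' y' unfolding first_mark_after_def last_mark_before_def by auto
    have B1: "labels_in B P lab x (x' - 1)"
      by (rule labels_in_unmarked[OF lab]) (use x' \<open>x' \<le> y'\<close> \<open>y' \<le> y\<close> in \<open>auto simp: first_mark_after_def Q_def\<close>)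
    have B2: "labels_in B P lab y' y"
      by (rule labels_in_unmarked[OF lab]) (use y' \<open>x < x'\<close> \<open>x' \<le> y'\<close> in \<open>auto simp: last_mark_before_def Q_def\<close>)
    have "marked_prod H Q L x' y' \<in> carrier H"
      using monoid.marked_prod_closed[OF monoid_local_divisor[OF c] labH[unfolded H_def]] unfolding H_def .
    moreover have "1 \<le> x'" "1 \<le> y'" using \<open>x < x'\<close> \<open>x' \<le> y'\<close> by auto
    ultimately show ?split
      using x' y' B1 B2 labH eq \<open>x < x'\<close> \<open>x' \<le> y'\<close> marked_prod_closed labels_in_mono[OF B1 B]
        labels_in_mono[OF B2 B] by blast
  qed blast
  finally show ?thesis using True by blast
qed

end

section \<open>Definability of products in finite aperiodic monoids\<close>

definition definable_labelling :: "((nat \<Rightarrow> 'a) \<Rightarrow> nat \<Rightarrow> 'm) \<Rightarrow> bool" where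
  "definable_labelling lab \<longleftrightarrow> (\<forall>u. fo_definable1 (\<lambda>s p. lab s p = u))"

definition definable_products ::
    "('m, 'b) monoid_scheme \<Rightarrow> 'm set \<Rightarrow> ((nat \<Rightarrow> 'a) \<Rightarrow> nat \<Rightarrow> bool) \<Rightarrow> ((nat \<Rightarrow> 'a) \<Rightarrow> nat \<Rightarrow> 'm) \<Rightarrow> bool" where
  "definable_products G A P lab \<longleftrightarrow>
     (\<forall>m. fo_definable2 (\<lambda>s x y. labels_in A (P s) (lab s) x y \<and> marked_prod G (P s) (lab s) x y = m))"

lemma fo_definable2_labels_in:
  assumes P: "fo_definable1 P" and lab: "definable_labelling lab" and "finite A"
  shows "fo_definable2 (\<lambda>s x y. labels_in A (P s) (lab s) x y)"
proof -
  have "fo_definable1 (\<lambda>s z. \<exists>a\<in>A. lab s z = a)"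
    using lab \<open>finite A\<close> unfolding definable_labelling_def by (intro fo_definable1_bex) auto
  then have "fo_definable2 (\<lambda>s x y. \<not> (\<exists>z\<ge>1. x < z \<and> (z \<le> y \<and> P s z \<and> \<not> (\<exists>a\<in>A. lab s z = a))))"
    by (intro fo_definable2_neg fo_definable2_relcomp fo_definable2_less fo_definable2_conj
        fo_definable2_le fo_definable2_fst fo_definable1_conj P fo_definable1_neg)
  then show ?thesis by (rule fo_definable2_cong) (auto simp: labels_in_def)
qed

lemma fo_definable2_first_mark_after:
  assumes "fo_definable1 Q"
  shows "fo_definable2 (\<lambda>s x y. first_mark_after (Q s) x y)"
proof -
  have "fo_definable2 (\<lambda>s x y. x < y \<and> Q s y \<and> \<not> (\<exists>w\<ge>1. x < w \<and> (w < y \<and> Q s w)))"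
    by (intro fo_definable2_conj fo_definable2_less fo_definable2_snd assms fo_definable2_neg
        fo_definable2_relcomp fo_definable2_fst)
  then show ?thesis by (rule fo_definable2_cong) (auto simp: first_mark_after_def)
qed

lemma fo_definable2_last_mark_before:
  assumes "fo_definable1 Q"
  shows "fo_definable2 (\<lambda>s x y. last_mark_before (Q s) x y)"
proof -
  have "fo_definable2 (\<lambda>s x y. x < y \<and> Q s x \<and> \<not> (\<exists>w\<ge>1. (x < w \<and> Q s w) \<and> w < y))"
    by (intro fo_definable2_conj fo_definable2_less fo_definable2_fst assms fo_definable2_neg
        fo_definable2_relcomp fo_definable2_snd)
  then show ?thesis by (rule fo_definable2_cong) (auto simp: last_mark_before_def)
qed

lemma fo_definable2_last_mark_upto:
  assumes "fo_definable1 Q"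
  shows "fo_definable2 (\<lambda>s x y. last_mark_before (Q s) x (Suc y))"
proof -
  have "fo_definable2 (\<lambda>s x y. x \<le> y \<and> Q s x \<and> \<not> (\<exists>w\<ge>1. (x < w \<and> Q s w) \<and> w \<le> y))"
    by (intro fo_definable2_conj fo_definable2_le fo_definable2_fst assms fo_definable2_neg
        fo_definable2_relcomp fo_definable2_less fo_definable2_snd)
  then show ?thesis by (rule fo_definable2_cong) (auto simp: last_mark_before_def less_Suc_eq_le)
qed

lemma fo_definable2_pred_snd:
  assumes "fo_definable2 D"
  shows "fo_definable2 (\<lambda>s x y. x < y \<and> D s x (y - 1))"
proof -
  have "fo_definable2 (\<lambda>s x y. x < y \<and> (\<exists>z\<ge>1. D s x z \<and> (z < y \<and> \<not> (\<exists>w\<ge>1. z < w \<and> w < y))))"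
    by (intro fo_definable2_conj fo_definable2_less fo_definable2_relcomp assms fo_definable2_neg)
  then show ?thesis
  proof (rule fo_definable2_cong)
    fix s and x y :: nat assume "1 \<le> x"
    have "(z < y \<and> \<not> (\<exists>w\<ge>1. z < w \<and> w < y)) \<longleftrightarrow> z = y - 1" if "1 \<le> z" for z
      using that by (auto simp: not_less_eq)
    then have "(\<exists>z\<ge>1. D s x z \<and> (z < y \<and> \<not> (\<exists>w\<ge>1. z < w \<and> w < y))) \<longleftrightarrow> 1 \<le> y - 1 \<and> D s x (y - 1)"
      by auto
    then show "(x < y \<and> (\<exists>z\<ge>1. D s x z \<and> (z < y \<and> \<not> (\<exists>w\<ge>1. z < w \<and> w < y)))) \<longleftrightarrow> x < y \<and> D s x (y - 1)"
      using \<open>1 \<le> x\<close> by auto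
  qed
qed

lemma definable_block_label:
  assumes fin: "finite (carrier G)" and G: "monoid G" and B: "B \<subseteq> carrier G"
    and P: "fo_definable1 P" and lab: "definable_labelling lab"
    and prods: "definable_products G B P lab"
  shows "definable_labelling (\<lambda>s. block_label G c B (P s) (lab s))"
  unfolding definable_labelling_def
proof
  fix u
  define Q where "Q = (\<lambda>s p. P s p \<and> lab s p = c)"
  define R where "R = (\<lambda>t s q p. last_mark_before (Q s) q p \<and>
     (q < p \<and> (labels_in B (P s) (lab s) q (p - 1) \<and> marked_prod G (P s) (lab s) q (p - 1) = t)))"
  have dQ: "fo_definable1 Q"
    using P lab unfolding definable_labelling_def Q_def by (intro fo_definable1_conj) auto
  have dR: "fo_definable2 (R t)" for t
  proof -
    have "fo_definable2 (\<lambda>s q p. q < p \<and>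
        (labels_in B (P s) (lab s) q (p - 1) \<and> marked_prod G (P s) (lab s) q (p - 1) = t))"
      using prods unfolding definable_products_def by (intro fo_definable2_pred_snd) blast
    then show ?thesis
      unfolding R_def by (rule fo_definable2_conj[OF fo_definable2_last_mark_before[OF dQ]])
  qed
  have "fo_definable1 (\<lambda>s p. (\<exists>q\<ge>1. \<exists>t\<in>carrier G. R t s q p \<and> c \<otimes>\<^bsub>G\<^esub> t \<otimes>\<^bsub>G\<^esub> c = u)
      \<or> (\<not> (\<exists>q\<ge>1. \<exists>t\<in>carrier G. R t s q p) \<and> u = c))"
    by (intro fo_definable1_disj fo_definable1_ex fo_definable2_bex fin fo_definable2_conj dR
        fo_definable2_const fo_definable1_conj fo_definable1_neg fo_definable1_const)
  then show "fo_definable1 (\<lambda>s p. block_label G c B (P s) (lab s) p = u)"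
  proof (rule fo_definable1_cong)
    fix s p
    have R_iff: "R t s q p \<longleftrightarrow> last_mark_before (Q s) q p \<and> labels_in B (P s) (lab s) q (p - 1)
        \<and> marked_prod G (P s) (lab s) q (p - 1) = t" for t q
      unfolding R_def last_mark_before_def by auto
    have closed: "labels_in B (P s) (lab s) q (p - 1) \<Longrightarrow> marked_prod G (P s) (lab s) q (p - 1) \<in> carrier G" for q
      using monoid.marked_prod_closed[OF G] labels_in_mono[OF _ B] by blast
    show "((\<exists>q\<ge>1. \<exists>t\<in>carrier G. R t s q p \<and> c \<otimes>\<^bsub>G\<^esub> t \<otimes>\<^bsub>G\<^esub> c = u)
        \<or> (\<not> (\<exists>q\<ge>1. \<exists>t\<in>carrier G. R t s q p) \<and> u = c)) \<longleftrightarrow> block_label G c B (P s) (lab s) p = u"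
    proof (cases "\<exists>q\<ge>1. last_mark_before (Q s) q p \<and> labels_in B (P s) (lab s) q (p - 1)")
      case True
      then obtain q where q: "1 \<le> q" "last_mark_before (Q s) q p" "labels_in B (P s) (lab s) q (p - 1)"
        by blast
      have "(\<exists>q\<ge>1. \<exists>t\<in>carrier G. R t s q p \<and> c \<otimes>\<^bsub>G\<^esub> t \<otimes>\<^bsub>G\<^esub> c = u)
          \<longleftrightarrow> c \<otimes>\<^bsub>G\<^esub> marked_prod G (P s) (lab s) q (p - 1) \<otimes>\<^bsub>G\<^esub> c = u"
        using q closed last_mark_before_unique[OF q(2)] unfolding R_iff by blast
      moreover have "\<exists>q\<ge>1. \<exists>t\<in>carrier G. R t s q p" using q closed unfolding R_iff by blast
      ultimately show ?thesis using block_label_eq[OF q(2)[unfolded Q_def] q(1,3)] by auto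
    next
      case False
      then show ?thesis using block_label_default[of "P s" "lab s" c p B G] unfolding R_iff Q_def by auto
    qed
  qed
qed

lemma definable_products_step:
  fixes G :: "'m monoid" and P :: "(nat \<Rightarrow> 'a) \<Rightarrow> nat \<Rightarrow> bool" and lab :: "(nat \<Rightarrow> 'a) \<Rightarrow> nat \<Rightarrow> 'm"
  assumes fin: "finite (carrier G)" and G: "monoid G" and A: "A \<subseteq> carrier G" and c: "c \<in> A"
    and P: "fo_definable1 P" and lab: "definable_labelling lab"
    and prods_B: "definable_products G (A - {c}) P lab"
    and prods_local: "\<And>(P' :: (nat \<Rightarrow> 'a) \<Rightarrow> nat \<Rightarrow> bool) lab'. fo_definable1 P' \<Longrightarrow> definable_labelling lab'
       \<Longrightarrow> definable_products (local_divisor G c) (carrier (local_divisor G c)) P' lab'"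
  shows "definable_products G A P lab"
  unfolding definable_products_def
proof
  fix m
  define B where "B = A - {c}"
  define Q where "Q = (\<lambda>s p. P s p \<and> lab s p = c)"
  define H where "H = local_divisor G c"
  define L where "L = (\<lambda>s. block_label G c B (P s) (lab s))"
  define prodB where "prodB = (\<lambda>t s x y. labels_in B (P s) (lab s) x y \<and> marked_prod G (P s) (lab s) x y = t)"
  define prodH where "prodH = (\<lambda>t s x y. labels_in (carrier H) (Q s) (L s) x y \<and> marked_prod H (Q s) (L s) x y = t)"
  have cG: "c \<in> carrier G" and BG: "B \<subseteq> carrier G" and AB: "A = insert c B"
    using A c unfolding B_def by auto
  have dQ: "fo_definable1 Q"
    using P lab unfolding definable_labelling_def Q_def by (intro fo_definable1_conj) auto
  have dB: "fo_definable2 (prodB t)" for t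
    using prods_B unfolding B_def prodB_def definable_products_def by blast
  have dH: "fo_definable2 (prodH t)" for t
    using prods_local[OF dQ definable_block_label[OF fin G BG P lab prods_B[folded B_def]]]
    unfolding prodH_def H_def L_def definable_products_def by blast
  have finH: "finite (carrier H)"
    using finite_subset[OF monoid.local_divisor_subset[OF G cG] fin] unfolding H_def .
  have "fo_definable2 (\<lambda>s x y. labels_in A (P s) (lab s) x y \<and>
    (((\<exists>w\<ge>1. x < w \<and> w \<le> y \<and> Q s w) \<and>
      (\<exists>m1\<in>carrier G. \<exists>\<pi>\<in>carrier H. \<exists>m2\<in>carrier G. m1 \<otimes>\<^bsub>G\<^esub> \<pi> \<otimes>\<^bsub>G\<^esub> m2 = m \<and>
        (\<exists>x'\<ge>1. (first_mark_after (Q s) x x' \<and> x < x' \<and> prodB m1 s x (x' - 1))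
          \<and> (\<exists>y'\<ge>1. (prodH \<pi> s x' y' \<and> x' \<le> y') \<and> last_mark_before (Q s) y' (Suc y) \<and> prodB m2 s y' y))))
    \<or> (\<not> (\<exists>w\<ge>1. x < w \<and> w \<le> y \<and> Q s w) \<and> prodB m s x y)))"
    by (intro fo_definable2_conj fo_definable2_labels_in P lab finite_subset[OF A fin] fo_definable2_disj
        fo_definable2_neg fo_definable2_relcomp fo_definable2_less fo_definable2_le fo_definable2_fst dQ dB
        fo_definable2_bex fin finH fo_definable2_const fo_definable2_first_mark_after fo_definable2_pred_snd
        dH fo_definable2_last_mark_upto)
  then show "fo_definable2 (\<lambda>s x y. labels_in A (P s) (lab s) x y \<and> marked_prod G (P s) (lab s) x y = m)"
    by (rule fo_definable2_cong)
      (use monoid.marked_prod_eq_iff_split_at_marks[OF G cG BG] in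
        \<open>unfold AB prodB_def prodH_def Q_def H_def L_def, blast\<close>)
qed

lemma definable_products_trivial:
  assumes "monoid G" "A \<subseteq> {\<one>\<^bsub>G\<^esub>}" "fo_definable1 P" "definable_labelling lab"
  shows "definable_products G A P lab"
  unfolding definable_products_def
proof
  fix m
  have "fo_definable2 (\<lambda>s x y. labels_in A (P s) (lab s) x y \<and> \<one>\<^bsub>G\<^esub> = m)"
    using assms(2-4) finite_subset[OF assms(2)]
    by (intro fo_definable2_conj fo_definable2_labels_in fo_definable2_const) auto
  then show "fo_definable2 (\<lambda>s x y. labels_in A (P s) (lab s) x y \<and> marked_prod G (P s) (lab s) x y = m)"
    by (rule fo_definable2_cong)
      (use monoid.marked_prod_labels_one[OF assms(1)] labels_in_mono[OF _ assms(2)] in metis)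
qed

theorem definable_products:
  fixes G :: "'m monoid" and P :: "(nat \<Rightarrow> 'a) \<Rightarrow> nat \<Rightarrow> bool" and lab :: "(nat \<Rightarrow> 'a) \<Rightarrow> nat \<Rightarrow> 'm"
  assumes "finite (carrier G)" "aperiodic_monoid G" "A \<subseteq> carrier G"
    and "fo_definable1 P" "definable_labelling lab"
  shows "definable_products G A P lab"
  using assms
proof (induction "card (carrier G)" arbitrary: G A P lab rule: less_induct)
  case less
  note fin = less.prems(1) and aper = less.prems(2)
  have G: "monoid G" using aper unfolding aperiodic_monoid_def by blast
  have local: "definable_products (local_divisor G c) (carrier (local_divisor G c)) P' lab'"
    if "c \<in> carrier G" "c \<noteq> \<one>\<^bsub>G\<^esub>" "fo_definable1 P'" "definable_labelling lab'"
    for c and P' :: "(nat \<Rightarrow> 'a) \<Rightarrow> nat \<Rightarrow> bool" and lab'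
    using less.hyps[OF monoid.card_local_divisor_less[OF G aper fin that(1,2)]
        finite_subset[OF monoid.local_divisor_subset[OF G that(1)] fin]
        monoid.aperiodic_local_divisor[OF G aper that(1)] order_refl that(3,4)] .
  show ?case using \<open>A \<subseteq> carrier G\<close>
  proof (induction "card A" arbitrary: A rule: less_induct)
    case (less A)
    show ?case
    proof (cases "A \<subseteq> {\<one>\<^bsub>G\<^esub>}")
      case True
      then show ?thesis using definable_products_trivial G \<open>fo_definable1 P\<close> \<open>definable_labelling lab\<close> by blast
    next
      case False
      then obtain c where c: "c \<in> A" "c \<noteq> \<one>\<^bsub>G\<^esub>" by blast
      have "card (A - {c}) < card A"
        by (rule card_Diff1_less[OF finite_subset[OF less.prems fin] c(1)])
      then have "definable_products G (A - {c}) P lab" using less.hyps less.prems by blast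
      then show ?thesis
        using definable_products_step[OF fin G less.prems c(1) \<open>fo_definable1 P\<close> \<open>definable_labelling lab\<close>]
          local c less.prems by blast
    qed
  qed
qed

section \<open>Behaviours of streaming transducers\<close>

lemma subst_append: "subst \<sigma> (xs @ ys) = subst \<sigma> xs @ subst \<sigma> ys"
  unfolding subst_def by simp

lemma subst_Nil: "subst \<sigma> [] = []"
  unfolding subst_def by simp

lemma subst_Cons: "subst \<sigma> (c # w) = (case c of Inl g \<Rightarrow> [Inl g] | Inr X \<Rightarrow> \<sigma> X) @ subst \<sigma> w"
  unfolding subst_def by simp

lemma subst_id: "subst (\<lambda>X. [Inr X]) w = w"
  by (induction w) (auto simp: subst_Nil subst_Cons split: sum.split)

lemma subst_subst: "subst \<sigma> (subst \<tau> w) = subst (\<lambda>Y. subst \<sigma> (\<tau> Y)) w"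
  by (induction w) (auto simp: subst_Nil subst_Cons subst_append split: sum.split)

lemma count_list_subst:
  fixes \<sigma> :: "'x::finite \<Rightarrow> ('g + 'x) list"
  shows "count_list (subst \<sigma> w) (Inr X) = (\<Sum>Z\<in>UNIV. count_list w (Inr Z) * count_list (\<sigma> Z) (Inr X))"
proof (induction w)
  case Nil
  then show ?case by (simp add: subst_def)
next
  case (Cons c w)
  show ?case
  proof (cases c)
    case (Inl g)
    then show ?thesis using Cons by (simp add: subst_Cons)
  next
    case (Inr Y)
    have "(\<Sum>Z\<in>UNIV. count_list (Inr Y # w) (Inr Z) * count_list (\<sigma> Z) (Inr X))
        = (\<Sum>Z\<in>UNIV. (if Y = Z then count_list (\<sigma> Z) (Inr X) else 0)
            + count_list w (Inr Z) * count_list (\<sigma> Z) (Inr X))"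
      by (rule sum.cong) (auto simp: algebra_simps)
    also have "\<dots> = count_list (\<sigma> Y) (Inr X) + (\<Sum>Z\<in>UNIV. count_list w (Inr Z) * count_list (\<sigma> Z) (Inr X))"
      by (simp add: sum.distrib)
    finally show ?thesis using Cons Inr by (simp add: subst_Cons)
  qed
qed

lemma foldl_step:
  "foldl (step T) (q, \<sigma>) v = (state_after T q v, \<lambda>Y. subst \<sigma> (snd (run_from T q v) Y))"
proof (induction v arbitrary: q \<sigma>)
  case Nil
  then show ?case by (simp add: run_from_def state_after_def subst_def)
next
  case (Cons a v)
  have step: "step T (q, \<sigma>) a = (delta T q a, \<lambda>Y. subst \<sigma> (upd T q a Y))" for \<sigma>
    by (simp add: step_def)
  have "run_from T q (a # v) = foldl (step T) (delta T q a, \<lambda>Y. subst (\<lambda>X. [Inr X]) (upd T q a Y)) v"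
    unfolding run_from_def by (simp add: step)
  then show ?case
    unfolding foldl_Cons step Cons by (simp add: state_after_def subst_id subst_subst)
qed

lemma fst_run_from: "fst (run_from T p u) = state_after T p u"
  unfolding run_from_def using foldl_step[of T p "\<lambda>X. [Inr X]" u] by simp

lemma run_from_append:
  "run_from T p (u @ v) = (state_after T (state_after T p u) v,
     \<lambda>Y. subst (snd (run_from T p u)) (snd (run_from T (state_after T p u) v) Y))"
proof -
  have "run_from T p (u @ v) = foldl (step T) (run_from T p u) v" unfolding run_from_def by simp
  also have "run_from T p u = (state_after T p u, snd (run_from T p u))"
    by (simp add: fst_run_from[symmetric])
  finally show ?thesis by (simp add: foldl_step)
qed

text \<open>The behaviour of a word maps each start state to the end state and the matrix of
  variable flows \<open>(p, X) \<rightsquigarrow>\<^sup>u\<^sub>k (q, Y)\<close>, indexed as \<open>Y X \<mapsto> k\<close>.\<close>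

definition behaviour :: "('a, 'g, 'q, 'x) sst \<Rightarrow> 'a list \<Rightarrow> 'q \<Rightarrow> 'q \<times> ('x \<Rightarrow> 'x \<Rightarrow> nat)" where
  "behaviour T u = (\<lambda>p. (state_after T p u, \<lambda>Y X. count_list (snd (run_from T p u) Y) (Inr X)))"

definition behaviour_comp ::
    "('q \<Rightarrow> 'q \<times> ('x::finite \<Rightarrow> 'x \<Rightarrow> nat)) \<Rightarrow> ('q \<Rightarrow> 'q \<times> ('x \<Rightarrow> 'x \<Rightarrow> nat)) \<Rightarrow> 'q \<Rightarrow> 'q \<times> ('x \<Rightarrow> 'x \<Rightarrow> nat)" where
  "behaviour_comp f g =
     (\<lambda>p. (fst (g (fst (f p))), \<lambda>Y X. \<Sum>Z\<in>UNIV. snd (g (fst (f p))) Y Z * snd (f p) Z X))"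

lemma behaviour_append:
  fixes T :: "('a, 'g, 'q, 'x::finite) sst"
  shows "behaviour T (u @ v) = behaviour_comp (behaviour T u) (behaviour T v)"
  unfolding behaviour_def behaviour_comp_def
  by (rule ext) (simp add: run_from_append count_list_subst state_after_def)

definition behaviour_monoid :: "('a, 'g, 'q, 'x::finite) sst \<Rightarrow> ('q \<Rightarrow> 'q \<times> ('x \<Rightarrow> 'x \<Rightarrow> nat)) monoid" where
  "behaviour_monoid T = \<lparr>carrier = range (behaviour T), mult = behaviour_comp, one = behaviour T []\<rparr>"

lemma monoid_behaviour_monoid: "monoid (behaviour_monoid T)"
  by (unfold_locales) (auto simp: behaviour_monoid_def behaviour_append[symmetric])

lemma behaviour_pow: "behaviour T u [^]\<^bsub>behaviour_monoid T\<^esub> (n::nat) = behaviour T (wpow u n)"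
proof (induction n)
  case (Suc n)
  have "wpow u (Suc n) = wpow u n @ u" unfolding wpow_def by (simp add: replicate_append_same[symmetric])
  then show ?case using Suc by (simp add: behaviour_monoid_def behaviour_append)
qed (simp add: behaviour_monoid_def wpow_def)

lemma behaviour_eq_if_tmat_eq:
  assumes "tmat T u = tmat T v"
  shows "behaviour T u = behaviour T v"
proof
  fix p
  define q where "q = state_after T p u"
  have t: "tmat T u (p, X) (q, Y) = tmat T v (p, X) (q, Y)" for X Y
    using assms by simp
  have q: "state_after T p v = q"
    using t[of undefined undefined] unfolding tmat_def Let_def q_def by (auto split: if_splits)
  have "count_list (snd (run_from T p u) Y) (Inr X) = count_list (snd (run_from T p v) Y) (Inr X)" for X Y
    using t[of X Y] q unfolding tmat_def Let_def q_def by (auto split: if_splits)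
  then show "behaviour T u p = behaviour T v p" unfolding behaviour_def using q q_def by auto
qed

lemma aperiodic_behaviour_monoid:
  assumes "aperiodic T"
  shows "aperiodic_monoid (behaviour_monoid T)"
  unfolding aperiodic_monoid_def
proof (intro conjI ballI monoid_behaviour_monoid)
  fix f assume "f \<in> carrier (behaviour_monoid T)"
  then obtain u where "f = behaviour T u" by (auto simp: behaviour_monoid_def)
  moreover obtain n where "\<forall>u. tmat T (wpow u n) = tmat T (wpow u (Suc n))"
    using assms unfolding aperiodic_def by blast
  ultimately show "\<exists>n::nat. f [^]\<^bsub>behaviour_monoid T\<^esub> n = f [^]\<^bsub>behaviour_monoid T\<^esub> Suc n"
    using behaviour_eq_if_tmat_eq by (metis behaviour_pow)
qed

lemma count_flow_le_1:
  assumes "one_bounded T"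
  shows "count_list (snd (run_from T p u) Y) (Inr X) \<le> 1"
  using assms unfolding one_bounded_def tmat_def Let_def by fastforce

lemma finite_behaviour_monoid:
  fixes T :: "('a, 'g, 'q::finite, 'x::finite) sst"
  assumes "one_bounded T"
  shows "finite (carrier (behaviour_monoid T))"
proof -
  define enc where "enc = (\<lambda>f :: 'q \<Rightarrow> 'q \<times> ('x \<Rightarrow> 'x \<Rightarrow> nat). \<lambda>p. (fst (f p), \<lambda>Y X. snd (f p) Y X = 1))"
  have "inj_on enc (range (behaviour T))"
  proof (rule inj_onI)
    fix f g assume "f \<in> range (behaviour T)" "g \<in> range (behaviour T)" and eq: "enc f = enc g"
    then have "snd (f p) Y X \<le> 1" "snd (g p) Y X \<le> 1" for p X Y
      using count_flow_le_1[OF assms] by (auto simp: behaviour_def)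
    moreover have "fst (f p) = fst (g p)" "(snd (f p) Y X = 1) = (snd (g p) Y X = 1)" for p X Y
      using fun_cong[OF eq, of p] unfolding enc_def by (auto dest: fun_cong)
    ultimately have "f p = g p" for p by (metis le_antisym less_one not_le prod_eqI ext)
    then show "f = g" ..
  qed
  then show ?thesis unfolding behaviour_monoid_def
    using finite_imageD[OF finite_subset[OF subset_UNIV finite_UNIV]] by auto
qed

lemma marked_prod_behaviour:
  "marked_prod (behaviour_monoid T) (\<lambda>p. True) (\<lambda>p. behaviour T [s (p - 1)]) x y = behaviour T (factor s x y)"
proof (induction y)
  case (Suc y)
  then show ?case
    by (cases "Suc y \<le> x") (auto simp: factor_def behaviour_monoid_def behaviour_append[symmetric])
qed (simp add: factor_def behaviour_monoid_def)

lemma fo_definable2_behaviour_factor: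
  fixes T :: "('a::finite, 'g, 'q::finite, 'x::finite) sst"
  assumes "aperiodic T" "one_bounded T"
  shows "fo_definable2 (\<lambda>s x y. behaviour T (factor s x y) = f)"
proof -
  let ?M = "behaviour_monoid T" and ?lab = "\<lambda>s p. behaviour T [s (p - 1)]"
  have "definable_labelling ?lab"
    unfolding definable_labelling_def
  proof
    fix u
    have "fo_definable1 (\<lambda>s p. \<exists>a\<in>{a. behaviour T [a] = u}. s (p - 1) = a)"
      by (intro fo_definable1_bex fo_definable1_letter) simp
    then show "fo_definable1 (\<lambda>s p. behaviour T [s (p - 1)] = u)"
      by (rule fo_definable1_cong) auto
  qed
  then have "definable_products ?M (carrier ?M) (\<lambda>s p. True) ?lab"
    using definable_products finite_behaviour_monoid aperiodic_behaviour_monoid fo_definable1_const assms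
    by blast
  then have "fo_definable2 (\<lambda>s x y. labels_in (carrier ?M) (\<lambda>p. True) (?lab s) x y
      \<and> marked_prod ?M (\<lambda>p. True) (?lab s) x y = f)"
    unfolding definable_products_def by blast
  then show ?thesis
    by (rule fo_definable2_cong)
      (use marked_prod_behaviour[of T] in \<open>simp add: labels_in_def behaviour_monoid_def\<close>)
qed

lemma fo_definable1_behaviour_prefix:
  fixes T :: "('a::finite, 'g, 'q::finite, 'x::finite) sst"
  assumes "aperiodic T" "one_bounded T"
  shows "fo_definable1 (\<lambda>s i. behaviour T (pref s i) = g)"
proof -
  let ?M = "carrier (behaviour_monoid T)"
  have "fo_definable2 (\<lambda>s x i. \<exists>a\<in>UNIV. s (x - 1) = a \<and>
      (\<exists>f\<in>?M. behaviour T (factor s x i) = f \<and> behaviour_comp (behaviour T [a]) f = g))"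
    by (intro fo_definable2_bex finite_UNIV fo_definable2_conj fo_definable2_fst fo_definable1_letter
        finite_behaviour_monoid assms fo_definable2_behaviour_factor fo_definable2_const)
  then have "fo_definable1 (\<lambda>s i. \<exists>a\<in>UNIV. s 0 = a \<and>
      (\<exists>f\<in>?M. behaviour T (factor s 1 i) = f \<and> behaviour_comp (behaviour T [a]) f = g))"
    using fo_definable1_at_first by fastforce
  then show ?thesis
  proof (rule fo_definable1_cong)
    fix s :: "nat \<Rightarrow> 'a" and i :: nat assume "1 \<le> i"
    then have "pref s i = [s 0] @ factor s 1 i" unfolding pref_def factor_def by (simp add: upt_conv_Cons)
    then show "(\<exists>a\<in>UNIV. s 0 = a \<and> (\<exists>f\<in>?M. behaviour T (factor s 1 i) = f
        \<and> behaviour_comp (behaviour T [a]) f = g)) \<longleftrightarrow> behaviour T (pref s i) = g"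
      using behaviour_append[of T "[s 0]" "factor s 1 i"] by (auto simp: behaviour_monoid_def)
  qed
qed

lemma flows_iff_behaviour:
  assumes "i \<le> j"
  shows "flows T (runq T s i) X (factor s i j) k (runq T s j) Y \<longleftrightarrow>
    snd (behaviour T (factor s i j) (fst (behaviour T (pref s i) (init T)))) Y X = k"
proof -
  have "pref s j = pref s i @ factor s i j"
    unfolding pref_def factor_def using upt_add_eq_append[of 0 i "j - i"] assms by simp
  then have "runq T s j = state_after T (runq T s i) (factor s i j)"
    unfolding runq_def state_after_def by simp
  then show ?thesis unfolding flows_def behaviour_def runq_def fst_run_from by simp
qed

lemma fo_definable2_flow:
  fixes T :: "('a::finite, 'g, 'q::finite, 'x::finite) sst"
  assumes "aperiodic T" "one_bounded T"
  shows "fo_definable2 (\<lambda>s i j. snd (behaviour T (factor s i j) (fst (behaviour T (pref s i) (init T)))) Y X = k)"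
proof -
  let ?M = "carrier (behaviour_monoid T)"
  have "fo_definable2 (\<lambda>s i j. \<exists>g\<in>?M. behaviour T (pref s i) = g \<and>
      (\<exists>f\<in>?M. behaviour T (factor s i j) = f \<and> snd (f (fst (g (init T)))) Y X = k))"
  proof (intro fo_definable2_bex finite_behaviour_monoid[OF assms(2)] fo_definable2_conj)
    fix g f
    show "fo_definable2 (\<lambda>s i j. behaviour T (pref s i) = g)"
      by (rule fo_definable2_fst[OF fo_definable1_behaviour_prefix[OF assms]])
    show "fo_definable2 (\<lambda>s i j. behaviour T (factor s i j) = f)"
      by (rule fo_definable2_behaviour_factor[OF assms])
  qed (rule fo_definable2_const)
  then show ?thesis by (rule fo_definable2_cong) (auto simp: behaviour_monoid_def)
qed

theorem mainTheorem6:
  fixes T :: "('a::finite, 'g, 'q::finite, 'x::finite) sst"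
  assumes "copyless T"
    and "aperiodic T"
    and "one_bounded T"
  shows "\<forall>X Y. \<exists>\<phi> :: 'a fo. fv \<phi> \<subseteq> {0, 1} \<and>
           (\<forall>s i j \<nu>. in_dom T s \<longrightarrow> 1 \<le> i \<longrightarrow> i \<le> j \<longrightarrow>
              \<nu> 0 = i \<longrightarrow> \<nu> 1 = j \<longrightarrow> (\<forall>v. \<nu> v \<ge> 1) \<longrightarrow>
              (sat s \<nu> \<phi> \<longleftrightarrow> flows T (runq T s i) X (factor s i j) 1 (runq T s j) Y))"
proof (intro allI)
  fix X Y :: 'x
  let ?flow = "\<lambda>s i j. snd (behaviour T (factor s i j) (fst (behaviour T (pref s i) (init T)))) Y X = 1"
  obtain \<phi> :: "'a fo" where fv: "fv \<phi> \<subseteq> {0, 1}"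
    and sem: "\<forall>s \<nu>. pos_valuation \<nu> \<longrightarrow> sat s \<nu> \<phi> = ?flow s (\<nu> 0) (\<nu> 1)"
    using fo_definable2_flow[OF assms(2,3)] unfolding fo_definable2_def fo_definable_def by blast
  show "\<exists>\<phi> :: 'a fo. fv \<phi> \<subseteq> {0, 1} \<and>
           (\<forall>s i j \<nu>. in_dom T s \<longrightarrow> 1 \<le> i \<longrightarrow> i \<le> j \<longrightarrow>
              \<nu> 0 = i \<longrightarrow> \<nu> 1 = j \<longrightarrow> (\<forall>v. \<nu> v \<ge> 1) \<longrightarrow>
              (sat s \<nu> \<phi> \<longleftrightarrow> flows T (runq T s i) X (factor s i j) 1 (runq T s j) Y))"
  proof (intro exI[of _ \<phi>] conjI fv allI impI)
    fix s :: "nat \<Rightarrow> 'a" and i j :: nat and \<nu> :: "nat \<Rightarrow> nat"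
    assume "i \<le> j" "\<nu> 0 = i" "\<nu> 1 = j" "\<forall>v. 1 \<le> \<nu> v"
    then have "sat s \<nu> \<phi> \<longleftrightarrow> ?flow s i j" using sem unfolding pos_valuation_def by simp
    also have "\<dots> \<longleftrightarrow> flows T (runq T s i) X (factor s i j) 1 (runq T s j) Y"
      by (rule flows_iff_behaviour[symmetric, OF \<open>i \<le> j\<close>])
    finally show "sat s \<nu> \<phi> \<longleftrightarrow> flows T (runq T s i) X (factor s i j) 1 (runq T s j) Y" .
  qed
qed

end
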